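(* There is no graded Poisson-Lie structure on $\mathcal M$ prolonging the Sklyanin bracket which is differential, i.e. which satisfies ${\bf d}\{f,h\}=\{{\bf d}f,h\}+(-1)^{\deg f}\{f,{\bf d}h\}$ for all $f,h\in\mathcal M$. (For instance, for either structure of Type I or II one has $\{{\bf d}a,b\}+\{a,{\bf d}b\}=-2ab\theta^0-(3+2bc)\theta^1\neq -2ab\theta^0-(1+2bc)\theta^1={\bf d}\{a,b\}$.)
   Context: $\mathcal A$ is the commutative algebra generated by $a,b,c,d$ (entries of $T=\begin{pmatrix}a&b\\c&d\end{pmatrix}$) modulo $ad-bc=1$, with $\Delta(T)=T\otimes T$. Sklyanin bracket: $\{a,b\}=-ab,\ \{a,c\}=-ac,\ \{b,d\}=-bd,\ \{c,d\}=-cd,\ \{c,b\}=0,\ \{a,d\}=-2bc$. $\mathcal M$ is the $\mathbb Z_2$-graded commutative algebra generated by even $a,b,c,d$ and odd $\theta^0,\theta^1,\theta^2$, with even generators central, $\theta^i\theta^j=-\theta^j\theta^i$, and $ad-bc=1$. Coactions: $\Delta_R\theta^i=\theta^i\otimes1$; $\Delta_L\theta^0=(1+2bc)\otimes\theta^0-ac\otimes\theta^1+bd\otimes\theta^2$, $\Delta_L\theta^1=-2ab\otimes\theta^0+a^2\otimes\theta^1-b^2\otimes\theta^2$, $\Delta_L\theta^2=2cd\otimes\theta^0-c^2\otimes\theta^1+d^2\otimes\theta^2$, extended multiplicatively. A graded Poisson bracket on $\mathcal M$ satisfies graded symmetry $\{x,y\}=(-1)^{\deg x\deg y+1}\{y,x\}$,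 graded Leibniz $\{xy,z\}=x\{y,z\}+(-1)^{\deg y\deg z}\{x,z\}y$, and super Jacobi $(-1)^{\deg x\deg z}\{\{x,y\},z\}+(-1)^{\deg y\deg z}\{\{z,x\},y\}+(-1)^{\deg x\deg y}\{\{y,z\},x\}=0$; it extends to $\mathcal M\otimes\mathcal M$ by $\{x\otimes y,z\otimes w\}=(-1)^{\deg y\deg z}(\{x,z\}\otimes yw+xz\otimes\{y,w\})$. It is graded Poisson-Lie if $\Delta\{f,h\}=\{\Delta f,\Delta h\}$ ($f,h\in\mathcal A$), $\Delta_{L,R}\{\theta^i,f\}=\{\Delta_{L,R}\theta^i,\Delta f\}$ ($f\in\mathcal A$) and $\Delta_{L,R}\{\theta^i,\theta^j\}=\{\Delta_{L,R}\theta^i,\Delta_{L,R}\theta^j\}$; it prolongs the Sklyanin bracket if it restricts to it on $\mathcal A$. The exterior derivative ${\bf d}:\mathcal M\to\mathcal M$ is the odd derivation (${\bf d}(xy)={\bf d}x\,y+(-1)^{\deg x}x\,{\bf d}y$, ${\bf d}^2=0$) determined on generators by ${\bf d}T=\theta T$ and ${\bf d}\theta=\theta\theta$, where $\theta=\begin{pmatrix}\theta^0&\theta^1\\ \theta^2&-\theta^0\end{pmatrix}$ and products are matrix products. *)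

theory Defs
  imports Complex_Main
begin

typedef sl2 = "{(a::complex, b::complex, c::complex, d::complex). a*d - b*c = 1}"
  by (rule exI[of _ "(1,0,0,1)"]) simp

definition ca :: "sl2 \<Rightarrow> complex" where "ca g = (case Rep_sl2 g of (a,b,c,d) \<Rightarrow> a)"
definition cb :: "sl2 \<Rightarrow> complex" where "cb g = (case Rep_sl2 g of (a,b,c,d) \<Rightarrow> b)"
definition cc :: "sl2 \<Rightarrow> complex" where "cc g = (case Rep_sl2 g of (a,b,c,d) \<Rightarrow> c)"
definition cd :: "sl2 \<Rightarrow> complex" where "cd g = (case Rep_sl2 g of (a,b,c,d) \<Rightarrow> d)"

text \<open>Matrix product g*h; the coproduct Delta(T) = T (x) T is (Delta f)(g,h) = f(g h).\<close>
definition sl2_mult :: "sl2 \<Rightarrow> sl2 \<Rightarrow> sl2" where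
  "sl2_mult g h = Abs_sl2 (ca g * ca h + cb g * cc h, ca g * cb h + cb g * cd h,
                           cc g * ca h + cd g * cc h, cc g * cb h + cd g * cd h)"

inductive_set polyfun :: "('p \<Rightarrow> complex) set \<Rightarrow> ('p \<Rightarrow> complex) set"
  for coords :: "('p \<Rightarrow> complex) set" where
  pf_const: "(\<lambda>_. c) \<in> polyfun coords"
| pf_coord: "f \<in> coords \<Longrightarrow> f \<in> polyfun coords"
| pf_add: "f \<in> polyfun coords \<Longrightarrow> g \<in> polyfun coords \<Longrightarrow> (\<lambda>x. f x + g x) \<in> polyfun coords"
| pf_mult: "f \<in> polyfun coords \<Longrightarrow> g \<in> polyfun coords \<Longrightarrow> (\<lambda>x. f x * g x) \<in> polyfun coords"

text \<open>The algebra A = C[a,b,c,d]/(ad-bc-1), realised as polynomial functions on SL(2,C).\<close>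
definition Acar :: "(sl2 \<Rightarrow> complex) set" where
  "Acar = polyfun {ca, cb, cc, cd}"

section \<open>Grassmann algebra (coefficients indexed by finite sets of generator indices)\<close>

type_synonym grass = "nat set \<Rightarrow> complex"

text \<open>Sign of theta^S theta^T = sign * theta^(S Un T) (S, T disjoint, increasing order).\<close>
definition gsign :: "nat set \<Rightarrow> nat set \<Rightarrow> complex" where
  "gsign S T = (-1) ^ card {(s,t). s \<in> S \<and> t \<in> T \<and> t < s}"

definition gmul :: "grass \<Rightarrow> grass \<Rightarrow> grass" where
  "gmul x y = (\<lambda>U. if finite U then (\<Sum>S\<in>Pow U. gsign S (U - S) * x S * y (U - S)) else 0)"

definition gone :: grass where "gone = (\<lambda>S. if S = {} then 1 else 0)"

definition gprod :: "grass list \<Rightarrow> grass" where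
  "gprod xs = foldr gmul xs gone"

text \<open>Shift of generator indices by 3 (theta^i of the second tensor factor is index i+3).\<close>
definition gshift :: "grass \<Rightarrow> grass" where
  "gshift v = (\<lambda>U. if (\<forall>s\<in>U. 3 \<le> s) then v ((\<lambda>s. s - 3) ` U) else 0)"

text \<open>Algebra map sending theta^i (i<3) to sigma i.\<close>
definition gsubst :: "(nat \<Rightarrow> grass) \<Rightarrow> grass \<Rightarrow> grass" where
  "gsubst \<sigma> v = (\<lambda>U. \<Sum>S\<in>Pow {0,1,2}. v S * gprod (map \<sigma> (sorted_list_of_set S)) U)"

section \<open>Superfunctions: Grassmann-valued functions on a point set\<close>

type_synonym 'p sfun = "'p \<Rightarrow> grass"

definition szero :: "'p sfun" where "szero = (\<lambda>p S. 0)"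
definition sadd :: "'p sfun \<Rightarrow> 'p sfun \<Rightarrow> 'p sfun" where "sadd x y = (\<lambda>p S. x p S + y p S)"
definition sscale :: "complex \<Rightarrow> 'p sfun \<Rightarrow> 'p sfun" where "sscale c x = (\<lambda>p S. c * x p S)"
definition smul :: "'p sfun \<Rightarrow> 'p sfun \<Rightarrow> 'p sfun" where "smul x y = (\<lambda>p. gmul (x p) (y p))"
definition sconst :: "('p \<Rightarrow> complex) \<Rightarrow> 'p sfun" where
  "sconst f = (\<lambda>p S. if S = {} then f p else 0)"
definition stheta :: "nat \<Rightarrow> 'p sfun" where
  "stheta i = (\<lambda>p S. if S = {i} then 1 else 0)"
definition ssum :: "'p sfun list \<Rightarrow> 'p sfun" where "ssum xs = foldr sadd xs szero"

text \<open>The superalgebra M = A[theta^0,theta^1,theta^2].\<close>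
definition Mcar :: "sl2 sfun set" where
  "Mcar = {x. \<forall>S. if S \<subseteq> {0,1,2} then (\<lambda>p. x p S) \<in> Acar else (\<forall>p. x p S = 0)}"

definition evenp :: "'p sfun \<Rightarrow> bool" where "evenp x = (\<forall>p S. odd (card S) \<longrightarrow> x p S = 0)"
definition oddp :: "'p sfun \<Rightarrow> bool" where "oddp x = (\<forall>p S. even (card S) \<longrightarrow> x p S = 0)"
definition hom :: "'p sfun \<Rightarrow> bool" where "hom x = (evenp x \<or> oddp x)"
definition pdeg :: "'p sfun \<Rightarrow> nat" where "pdeg x = (if evenp x then 0 else 1)"

abbreviation sa :: "sl2 sfun" where "sa \<equiv> sconst ca"
abbreviation sb :: "sl2 sfun" where "sb \<equiv> sconst cb"
abbreviation sc :: "sl2 sfun" where "sc \<equiv> sconst cc"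
abbreviation sd :: "sl2 sfun" where "sd \<equiv> sconst cd"

text \<open>Elements of M (x) M as Grassmann-valued functions on SL2 x SL2 with 6 odd generators;
  x (x) y  corresponds to  x(theta) * y(theta'), matching the sign rule of the graded tensor product.\<close>
definition tens :: "sl2 sfun \<Rightarrow> sl2 sfun \<Rightarrow> (sl2 \<times> sl2) sfun" where
  "tens x y = (\<lambda>pq. gmul (x (fst pq)) (gshift (y (snd pq))))"

definition DeltaR :: "sl2 sfun \<Rightarrow> (sl2 \<times> sl2) sfun" where
  "DeltaR x = (\<lambda>pq. x (sl2_mult (fst pq) (snd pq)))"

definition Lgen :: "sl2 \<Rightarrow> nat \<Rightarrow> grass" where
  "Lgen p i = (\<lambda>U.
     if i = 0 then (if U = {3} then 1 + 2 * cb p * cc p else if U = {4} then - (ca p * cc p)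
                    else if U = {5} then cb p * cd p else 0)
     else if i = 1 then (if U = {3} then - 2 * ca p * cb p else if U = {4} then ((ca p)^2)
                    else if U = {5} then - ((cb p)^2) else 0)
     else (if U = {3} then 2 * cc p * cd p else if U = {4} then - ((cc p)^2)
                    else if U = {5} then ((cd p)^2) else 0))"

definition DeltaL :: "sl2 sfun \<Rightarrow> (sl2 \<times> sl2) sfun" where
  "DeltaL x = (\<lambda>pq. gsubst (Lgen (fst pq)) (x (sl2_mult (fst pq) (snd pq))))"

definition decomp :: "(sl2 \<times> sl2) sfun \<Rightarrow> (sl2 sfun \<times> sl2 sfun) list \<Rightarrow> bool" where
  "decomp X xs = ((\<forall>(x,y)\<in>set xs. x \<in> Mcar \<and> y \<in> Mcar \<and> hom x \<and> hom y)
                  \<and> X = ssum (map (\<lambda>(x,y). tens x y) xs))"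

definition tbr :: "(sl2 sfun \<Rightarrow> sl2 sfun \<Rightarrow> sl2 sfun) \<Rightarrow> sl2 sfun \<times> sl2 sfun
                    \<Rightarrow> sl2 sfun \<times> sl2 sfun \<Rightarrow> (sl2 \<times> sl2) sfun" where
  "tbr br u v = (case u of (x,y) \<Rightarrow> case v of (z,w) \<Rightarrow>
     sscale ((-1) ^ (pdeg y * pdeg z)) (sadd (tens (br x z) (smul y w)) (tens (smul x z) (br y w))))"

definition tbrsum :: "(sl2 sfun \<Rightarrow> sl2 sfun \<Rightarrow> sl2 sfun) \<Rightarrow> (sl2 sfun \<times> sl2 sfun) list
                      \<Rightarrow> (sl2 sfun \<times> sl2 sfun) list \<Rightarrow> (sl2 \<times> sl2) sfun" where
  "tbrsum br xs zs = ssum [tbr br u v. u \<leftarrow> xs, v \<leftarrow> zs]"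

definition graded_poisson :: "(sl2 sfun \<Rightarrow> sl2 sfun \<Rightarrow> sl2 sfun) \<Rightarrow> bool" where
  "graded_poisson br =
    ((\<forall>x\<in>Mcar. \<forall>y\<in>Mcar. br x y \<in> Mcar)
   \<and> (\<forall>x\<in>Mcar. \<forall>y\<in>Mcar. \<forall>z\<in>Mcar. br (sadd x y) z = sadd (br x z) (br y z)
                                   \<and> br z (sadd x y) = sadd (br z x) (br z y))
   \<and> (\<forall>x\<in>Mcar. \<forall>y\<in>Mcar. \<forall>c. br (sscale c x) y = sscale c (br x y)
                              \<and> br x (sscale c y) = sscale c (br x y))
   \<and> (\<forall>x\<in>Mcar. \<forall>y\<in>Mcar.
        (evenp x \<and> evenp y \<longrightarrow> evenp (br x y)) \<and> (evenp x \<and> oddp y \<longrightarrow> oddp (br x y))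
      \<and> (oddp x \<and> evenp y \<longrightarrow> oddp (br x y)) \<and> (oddp x \<and> oddp y \<longrightarrow> evenp (br x y)))
   \<and> (\<forall>x\<in>Mcar. \<forall>y\<in>Mcar. hom x \<longrightarrow> hom y \<longrightarrow>
        br x y = sscale ((-1) ^ (pdeg x * pdeg y + 1)) (br y x))
   \<and> (\<forall>x\<in>Mcar. \<forall>y\<in>Mcar. \<forall>z\<in>Mcar. hom x \<longrightarrow> hom y \<longrightarrow> hom z \<longrightarrow>
        br (smul x y) z = sadd (smul x (br y z)) (sscale ((-1) ^ (pdeg y * pdeg z)) (smul (br x z) y)))
   \<and> (\<forall>x\<in>Mcar. \<forall>y\<in>Mcar. \<forall>z\<in>Mcar. hom x \<longrightarrow> hom y \<longrightarrow> hom z \<longrightarrow>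
        sadd (sscale ((-1) ^ (pdeg x * pdeg z)) (br (br x y) z))
          (sadd (sscale ((-1) ^ (pdeg y * pdeg z)) (br (br z x) y))
                (sscale ((-1) ^ (pdeg x * pdeg y)) (br (br y z) x))) = szero))"

text \<open>Restriction to A is the Sklyanin bracket (determined by its values on generators).\<close>
definition prolongs_sklyanin :: "(sl2 sfun \<Rightarrow> sl2 sfun \<Rightarrow> sl2 sfun) \<Rightarrow> bool" where
  "prolongs_sklyanin br =
    (br sa sb = sscale (-1) (smul sa sb) \<and> br sa sc = sscale (-1) (smul sa sc)
   \<and> br sb sd = sscale (-1) (smul sb sd) \<and> br sc sd = sscale (-1) (smul sc sd)
   \<and> br sc sb = szero \<and> br sa sd = sscale (-2) (smul sb sc))"

definition poisson_lie :: "(sl2 sfun \<Rightarrow> sl2 sfun \<Rightarrow> sl2 sfun) \<Rightarrow> bool" where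
  "poisson_lie br =
    ((\<forall>f\<in>Acar. \<forall>h\<in>Acar. \<forall>xs zs. decomp (DeltaR (sconst f)) xs \<longrightarrow> decomp (DeltaR (sconst h)) zs \<longrightarrow>
        DeltaR (br (sconst f) (sconst h)) = tbrsum br xs zs)
   \<and> (\<forall>i<3. \<forall>f\<in>Acar. \<forall>xs zs. decomp (DeltaL (stheta i)) xs \<longrightarrow> decomp (DeltaR (sconst f)) zs \<longrightarrow>
        DeltaL (br (stheta i) (sconst f)) = tbrsum br xs zs)
   \<and> (\<forall>i<3. \<forall>f\<in>Acar. \<forall>xs zs. decomp (DeltaR (stheta i)) xs \<longrightarrow> decomp (DeltaR (sconst f)) zs \<longrightarrow>
        DeltaR (br (stheta i) (sconst f)) = tbrsum br xs zs)
   \<and> (\<forall>i<3. \<forall>j<3. \<forall>xs zs. decomp (DeltaL (stheta i)) xs \<longrightarrow> decomp (DeltaL (stheta j)) zs \<longrightarrow>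
        DeltaL (br (stheta i) (stheta j)) = tbrsum br xs zs)
   \<and> (\<forall>i<3. \<forall>j<3. \<forall>xs zs. decomp (DeltaR (stheta i)) xs \<longrightarrow> decomp (DeltaR (stheta j)) zs \<longrightarrow>
        DeltaR (br (stheta i) (stheta j)) = tbrsum br xs zs))"

definition is_ext_deriv :: "(sl2 sfun \<Rightarrow> sl2 sfun) \<Rightarrow> bool" where
  "is_ext_deriv d =
    ((\<forall>x\<in>Mcar. d x \<in> Mcar)
   \<and> (\<forall>x\<in>Mcar. \<forall>y\<in>Mcar. d (sadd x y) = sadd (d x) (d y))
   \<and> (\<forall>x\<in>Mcar. \<forall>c. d (sscale c x) = sscale c (d x))
   \<and> (\<forall>x\<in>Mcar. \<forall>y\<in>Mcar. hom x \<longrightarrow>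
        d (smul x y) = sadd (smul (d x) y) (sscale ((-1) ^ pdeg x) (smul x (d y))))
   \<and> (\<forall>x\<in>Mcar. d (d x) = szero)
   \<and> d sa = sadd (smul (stheta 0) sa) (smul (stheta 1) sc)
   \<and> d sb = sadd (smul (stheta 0) sb) (smul (stheta 1) sd)
   \<and> d sc = sadd (smul (stheta 2) sa) (sscale (-1) (smul (stheta 0) sc))
   \<and> d sd = sadd (smul (stheta 2) sb) (sscale (-1) (smul (stheta 0) sd))
   \<and> d (stheta 0) = smul (stheta 1) (stheta 2)
   \<and> d (stheta 1) = sscale 2 (smul (stheta 0) (stheta 1))
   \<and> d (stheta 2) = sscale (-2) (smul (stheta 0) (stheta 2)))"

definition differential :: "(sl2 sfun \<Rightarrow> sl2 sfun) \<Rightarrow> (sl2 sfun \<Rightarrow> sl2 sfun \<Rightarrow> sl2 sfun) \<Rightarrow> bool" where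
  "differential d br =
    (\<forall>f\<in>Mcar. \<forall>h\<in>Mcar. hom f \<longrightarrow> hom h \<longrightarrow>
       d (br f h) = sadd (br (d f) h) (sscale ((-1) ^ pdeg f) (br f (d h))))"

end

(*
  Write xi k f j for the theta^j-coefficient, at the identity of SL(2,C), of the bracket
  {theta^k, f}. The Sklyanin bracket vanishes at the identity, so by the Leibniz rule the
  degree-one part of {x, f} at the identity only depends on the degree-one part of x there;
  in particular the super Jacobi identity for theta^0, a, b becomes a quadratic relation among
  the numbers xi. Compatibility with Delta_R expresses {theta^0, a} at any point through its
  value at the identity, so compatibility with Delta_L, evaluated at (g, identity), gives linear
  relations among the xi for every g; differentiality applied to {a, b} and {a, c} gives six
  more. At four suitable points these linear relations determine the values entering the
  Jacobi relation, which then reads -1 = 0.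
*)
theory Submission
  imports Defs
begin

lemma sum_single_support:
  assumes "finite A" "a \<in> A" "\<And>x. x \<in> A \<Longrightarrow> x \<noteq> a \<Longrightarrow> f x = 0"
  shows "sum f A = f a"
  using sum.mono_neutral_left[of A "{a}" f] assms by simp

lemma sum_lessThan_3: "(\<Sum>k<3::nat. f k) = f 0 + f 1 + f 2"
  by (simp add: eval_nat_numeral lessThan_Suc add.commute add.left_commute)

section \<open>Grassmann algebra\<close>

definition gscalar :: "complex \<Rightarrow> grass" where
  "gscalar c = (\<lambda>U. if U = {} then c else 0)"

definition gbasis :: "nat set \<Rightarrow> grass" where
  "gbasis A = (\<lambda>U. if U = A then 1 else 0)"

lemma gsign_ordered: "(\<And>s t. s \<in> S \<Longrightarrow> t \<in> T \<Longrightarrow> s < t) \<Longrightarrow> gsign S T = 1"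
  unfolding gsign_def by (metis (mono_tags, lifting) card.empty case_prodE empty_Collect_eq
      less_asym power_0)

lemma gsign_empty_left [simp]: "gsign {} T = 1"
  and gsign_empty_right [simp]: "gsign S {} = 1"
  by (simp_all add: gsign_def)

lemma gmul_empty: "gmul x y {} = x {} * y {}"
  by (simp add: gmul_def)

lemma gmul_singleton: "gmul x y {k} = x {} * y {k} + x {k} * y {}"
proof -
  have "Pow {k} = {{}, {k}}" by blast
  then show ?thesis by (simp add: gmul_def insert_Diff_if)
qed

lemma gmul_zero_left [simp]: "gmul (\<lambda>_. 0) y = (\<lambda>_. 0)"
  and gmul_zero_right [simp]: "gmul x (\<lambda>_. 0) = (\<lambda>_. 0)"
  by (simp_all add: gmul_def fun_eq_iff)

lemma gmul_vanishing:
  assumes "\<And>S. S \<subseteq> U \<Longrightarrow> x S = 0 \<or> y (U - S) = 0"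
  shows "gmul x y U = 0"
  using assms by (auto simp: gmul_def intro!: sum.neutral)

lemma gmul_gscalar_left: "gmul (gscalar c) y U = (if finite U then c * y U else 0)"
proof (cases "finite U")
  case True
  then have "(\<Sum>S\<in>Pow U. gsign S (U - S) * gscalar c S * y (U - S)) = c * y U"
    by (subst sum_single_support[of _ "{}"]) (auto simp: gscalar_def)
  then show ?thesis using True by (simp add: gmul_def)
qed (simp add: gmul_def)

lemma gmul_gscalar_right: "gmul x (gscalar c) U = (if finite U then x U * c else 0)"
proof (cases "finite U")
  case True
  then have "(\<Sum>S\<in>Pow U. gsign S (U - S) * x S * gscalar c (U - S)) = x U * c"
    by (subst sum_single_support[of _ U]) (auto simp: gscalar_def)
  then show ?thesis using True by (simp add: gmul_def)
qed (simp add: gmul_def)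

lemma gmul_gbasis:
  "gmul (gbasis A) (gbasis B) U = (if finite U \<and> A \<subseteq> U \<and> U - A = B then gsign A B else 0)"
proof (cases "finite U \<and> A \<subseteq> U")
  case True
  then have "(\<Sum>S\<in>Pow U. gsign S (U - S) * gbasis A S * gbasis B (U - S))
      = gsign A (U - A) * gbasis B (U - A)"
    by (subst sum_single_support[of _ A]) (auto simp: gbasis_def)
  then show ?thesis using True by (auto simp: gmul_def gbasis_def)
next
  case False
  then show ?thesis by (auto simp: gmul_def gbasis_def intro!: sum.neutral)
qed

lemma gmul_gbasis_ordered:
  assumes "\<And>t. t \<in> B \<Longrightarrow> k < t" "finite B"
  shows "gmul (gbasis {k}) (gbasis B) = gbasis (insert k B)"
proof
  fix U
  have "k \<notin> B" using assms(1) by blast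
  then have "(finite U \<and> {k} \<subseteq> U \<and> U - {k} = B) \<longleftrightarrow> U = insert k B"
    using assms(2) by auto
  moreover have "gsign {k} B = 1" using assms(1) by (intro gsign_ordered) auto
  ultimately show "gmul (gbasis {k}) (gbasis B) U = gbasis (insert k B) U"
    unfolding gmul_gbasis by (simp add: gbasis_def)
qed

definition gparity :: "nat \<Rightarrow> grass \<Rightarrow> bool" where
  "gparity q v \<longleftrightarrow> (\<forall>S. odd (card S + q) \<longrightarrow> v S = 0)"

lemma gparity_gmul:
  assumes x: "gparity p x" and y: "gparity q y"
  shows "gparity (p + q) (gmul x y)"
  unfolding gparity_def
proof (intro allI impI)
  fix U :: "nat set"
  assume odd: "odd (card U + (p + q))"
  show "gmul x y U = 0"
  proof (cases "finite U")
    case True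
    show ?thesis
    proof (rule gmul_vanishing)
      fix S assume "S \<subseteq> U"
      then have "card U = card S + card (U - S)"
        using True by (metis card_Diff_subset card_mono finite_subset le_add_diff_inverse)
      then have "odd (card S + p) \<or> odd (card (U - S) + q)" using odd by auto
      then show "x S = 0 \<or> y (U - S) = 0" using x y by (auto simp: gparity_def)
    qed
  qed (simp add: gmul_def)
qed

section \<open>The superalgebra M\<close>

lemma sconst_apply: "sconst f p = gscalar (f p)"
  by (simp add: sconst_def gscalar_def fun_eq_iff)

lemma stheta_apply: "stheta i p = gbasis {i}"
  by (simp add: stheta_def gbasis_def fun_eq_iff)

lemma sconst_apply_empty [simp]: "sconst f p {} = f p"
  by (simp add: sconst_def)

lemma smul_apply_empty: "smul x y p {} = x p {} * y p {}"
  by (simp add: smul_def gmul_empty)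

lemma ssum_apply: "ssum xs p U = (\<Sum>x\<leftarrow>xs. x p U)"
  by (induction xs) (auto simp: ssum_def sadd_def szero_def)

lemma smul_sconst_sconst: "smul (sconst f) (sconst g) = sconst (\<lambda>p. f p * g p)"
  unfolding smul_def sconst_apply by (simp add: fun_eq_iff gmul_gscalar_left) (simp add: gscalar_def)

lemma sadd_sconst_sconst: "sadd (sconst f) (sconst g) = sconst (\<lambda>p. f p + g p)"
  by (auto simp: fun_eq_iff sadd_def sconst_def)

lemma sscale_sconst: "sscale c (sconst f) = sconst (\<lambda>p. c * f p)"
  by (auto simp: fun_eq_iff sscale_def sconst_def)

lemma Acar_const [intro, simp]: "(\<lambda>_. c) \<in> Acar"
  and Acar_coords [intro, simp]: "ca \<in> Acar" "cb \<in> Acar" "cc \<in> Acar" "cd \<in> Acar"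
  and Acar_add [intro]: "f \<in> Acar \<Longrightarrow> g \<in> Acar \<Longrightarrow> (\<lambda>x. f x + g x) \<in> Acar"
  and Acar_mult [intro]: "f \<in> Acar \<Longrightarrow> g \<in> Acar \<Longrightarrow> (\<lambda>x. f x * g x) \<in> Acar"
  unfolding Acar_def by (auto intro: polyfun.intros)

lemma Acar_sum: "finite I \<Longrightarrow> (\<And>i. i \<in> I \<Longrightarrow> f i \<in> Acar) \<Longrightarrow> (\<lambda>p. \<Sum>i\<in>I. f i p) \<in> Acar"
  by (induction I rule: finite_induct) auto

lemma Mcar_coeff: "x \<in> Mcar \<Longrightarrow> S \<subseteq> {0,1,2} \<Longrightarrow> (\<lambda>p. x p S) \<in> Acar"
  and Mcar_coeff_outside: "x \<in> Mcar \<Longrightarrow> \<not> S \<subseteq> {0,1,2} \<Longrightarrow> x p S = 0"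
  unfolding Mcar_def by (metis (mono_tags, lifting) mem_Collect_eq)+

lemma McarI:
  "(\<And>S. S \<subseteq> {0,1,2} \<Longrightarrow> (\<lambda>p. x p S) \<in> Acar) \<Longrightarrow> (\<And>S p. \<not> S \<subseteq> {0,1,2} \<Longrightarrow> x p S = 0)
    \<Longrightarrow> x \<in> Mcar"
  unfolding Mcar_def by auto

lemma Mcar_coeff_infinite: "x \<in> Mcar \<Longrightarrow> infinite S \<Longrightarrow> x p S = 0"
  by (meson Mcar_coeff_outside finite.emptyI finite.insertI finite_subset)

lemma sconst_Mcar:
  assumes "f \<in> Acar"
  shows "sconst f \<in> Mcar"
proof (rule McarI)
  show "(\<lambda>p. sconst f p S) \<in> Acar" for S
    using assms by (cases "S = {}") (auto simp: sconst_def)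
qed (auto simp: sconst_def)

lemma stheta_Mcar: "i < 3 \<Longrightarrow> stheta i \<in> Mcar"
  by (rule McarI) (auto simp: stheta_def eval_nat_numeral less_Suc_eq)

lemma szero_Mcar: "szero \<in> Mcar"
  by (rule McarI) (auto simp: szero_def)

lemma sadd_Mcar: "x \<in> Mcar \<Longrightarrow> y \<in> Mcar \<Longrightarrow> sadd x y \<in> Mcar"
  by (rule McarI) (auto simp: sadd_def Mcar_coeff_outside Mcar_coeff)

lemma sscale_Mcar: "x \<in> Mcar \<Longrightarrow> sscale c x \<in> Mcar"
  by (rule McarI) (auto simp: sscale_def Mcar_coeff_outside Mcar_coeff)

lemma ssum_Mcar: "(\<And>x. x \<in> set xs \<Longrightarrow> x \<in> Mcar) \<Longrightarrow> ssum xs \<in> Mcar"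
  by (induction xs) (auto simp: ssum_def szero_Mcar sadd_Mcar)

lemma smul_Mcar:
  assumes "x \<in> Mcar" "y \<in> Mcar"
  shows "smul x y \<in> Mcar"
proof (rule McarI)
  fix S :: "nat set"
  assume S: "S \<subseteq> {0,1,2}"
  then have "finite S" by (rule finite_subset) simp
  then have "(\<lambda>p. smul x y p S) = (\<lambda>p. \<Sum>T\<in>Pow S. gsign T (S - T) * x p T * y p (S - T))"
    by (simp add: smul_def gmul_def)
  also have "\<dots> \<in> Acar"
  proof (rule Acar_sum)
    fix T assume "T \<in> Pow S"
    then have "(\<lambda>p. x p T) \<in> Acar" "(\<lambda>p. y p (S - T)) \<in> Acar"
      using S assms Mcar_coeff[of x T] Mcar_coeff[of y "S - T"] by auto
    then show "(\<lambda>p. gsign T (S - T) * x p T * y p (S - T)) \<in> Acar"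
      by (intro Acar_mult[where f = "\<lambda>p. gsign T (S - T) * x p T"] Acar_mult[OF Acar_const])
  qed (simp add: \<open>finite S\<close>)
  finally show "(\<lambda>p. smul x y p S) \<in> Acar" .
next
  fix S :: "nat set" and p
  assume S: "\<not> S \<subseteq> {0,1,2}"
  show "smul x y p S = 0"
    unfolding smul_def
  proof (rule gmul_vanishing)
    fix T assume "T \<subseteq> S"
    then have "\<not> T \<subseteq> {0,1,2} \<or> \<not> S - T \<subseteq> {0,1,2}" using S by auto
    then show "x p T = 0 \<or> y p (S - T) = 0" using assms Mcar_coeff_outside by blast
  qed
qed

lemma smul_sconst_left: "x \<in> Mcar \<Longrightarrow> smul (sconst f) x = (\<lambda>p U. f p * x p U)"
  by (auto simp: fun_eq_iff smul_def sconst_apply gmul_gscalar_left Mcar_coeff_infinite)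

lemma smul_sconst_right: "x \<in> Mcar \<Longrightarrow> smul x (sconst f) = (\<lambda>p U. x p U * f p)"
  by (auto simp: fun_eq_iff smul_def sconst_apply gmul_gscalar_right Mcar_coeff_infinite)

lemma evenp_iff_gparity: "evenp x \<longleftrightarrow> (\<forall>p. gparity 0 (x p))"
  and oddp_iff_gparity: "oddp x \<longleftrightarrow> (\<forall>p. gparity 1 (x p))"
  by (simp_all add: evenp_def oddp_def gparity_def)

lemma oddp_smul_odd_even: "oddp x \<Longrightarrow> evenp y \<Longrightarrow> oddp (smul x y)"
  and evenp_smul_odd: "oddp x \<Longrightarrow> oddp y \<Longrightarrow> evenp (smul x y)"
  using gparity_gmul[of 1 _ 0] gparity_gmul[of 1 _ 1]
  by (simp_all add: evenp_iff_gparity oddp_iff_gparity smul_def gparity_def)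

lemma evenp_sconst [simp]: "evenp (sconst f)"
  and oddp_stheta [simp]: "oddp (stheta i)"
  and hom_sconst [simp]: "hom (sconst f)"
  and hom_stheta [simp]: "hom (stheta i)"
  and pdeg_sconst [simp]: "pdeg (sconst f) = 0"
  by (simp_all add: evenp_def oddp_def hom_def pdeg_def sconst_def stheta_def)

lemma oddp_sadd: "oddp x \<Longrightarrow> oddp y \<Longrightarrow> oddp (sadd x y)"
  and oddp_sscale: "oddp x \<Longrightarrow> oddp (sscale c x)"
  by (simp_all add: oddp_def sadd_def sscale_def)

lemma generators_Mcar: "sa \<in> Mcar" "sb \<in> Mcar" "sc \<in> Mcar" "sd \<in> Mcar"
  by (simp_all add: sconst_Mcar)

lemma sl2_det: "ca g * cd g - cb g * cc g = 1"
  using Rep_sl2[of g] by (auto simp: ca_def cb_def cc_def cd_def split: prod.splits)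

lemma Abs_sl2_coords:
  assumes "a * d - b * c = 1"
  shows "ca (Abs_sl2 (a,b,c,d)) = a" "cb (Abs_sl2 (a,b,c,d)) = b"
    "cc (Abs_sl2 (a,b,c,d)) = c" "cd (Abs_sl2 (a,b,c,d)) = d"
  using Abs_sl2_inverse[of "(a,b,c,d)"] assms by (auto simp: ca_def cb_def cc_def cd_def)

lemma Abs_sl2_Rep_coords: "Abs_sl2 (ca g, cb g, cc g, cd g) = g"
  by (metis (no_types, lifting) Rep_sl2_inverse ca_def cb_def cc_def cd_def case_prod_conv
      prod.collapse)

definition sl2_one :: sl2 where
  "sl2_one = Abs_sl2 (1, 0, 0, 1)"

lemma sl2_one_coords [simp]: "ca sl2_one = 1" "cb sl2_one = 0" "cc sl2_one = 0" "cd sl2_one = 1"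
  unfolding sl2_one_def by (simp_all add: Abs_sl2_coords)

lemma sl2_mult_one_left [simp]: "sl2_mult sl2_one g = g"
  and sl2_mult_one_right [simp]: "sl2_mult g sl2_one = g"
  by (simp_all add: sl2_mult_def Abs_sl2_Rep_coords)

lemma sl2_mult_coords:
  "ca (sl2_mult p q) = ca p * ca q + cb p * cc q"
  "cb (sl2_mult p q) = ca p * cb q + cb p * cd q"
  "cc (sl2_mult p q) = cc p * ca q + cd p * cc q"
  "cd (sl2_mult p q) = cc p * cb q + cd p * cd q"
proof -
  have "(ca p * ca q + cb p * cc q) * (cc p * cb q + cd p * cd q)
      - (ca p * cb q + cb p * cd q) * (cc p * ca q + cd p * cc q)
      = (ca p * cd p - cb p * cc p) * (ca q * cd q - cb q * cc q)"
    by (simp add: algebra_simps)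
  then show "ca (sl2_mult p q) = ca p * ca q + cb p * cc q" "cb (sl2_mult p q) = ca p * cb q + cb p * cd q"
    "cc (sl2_mult p q) = cc p * ca q + cd p * cc q" "cd (sl2_mult p q) = cc p * cb q + cd p * cd q"
    by (simp_all add: sl2_mult_def sl2_det Abs_sl2_coords)
qed

section \<open>Monomial decomposition\<close>

abbreviation one :: "sl2 sfun" where
  "one \<equiv> sconst (\<lambda>_. 1)"

definition monomials :: "(nat set \<times> sl2 sfun) list" where
  "monomials =
    [({}, one), ({0}, stheta 0), ({1}, stheta 1), ({2}, stheta 2),
     ({0,1}, smul (stheta 0) (stheta 1)), ({0,2}, smul (stheta 0) (stheta 2)),
     ({1,2}, smul (stheta 1) (stheta 2)), ({0,1,2}, smul (stheta 0) (smul (stheta 1) (stheta 2)))]"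

lemma monomial_apply: "(S, m) \<in> set monomials \<Longrightarrow> m p = gbasis S"
proof -
  have "gmul (gbasis {0}) (gbasis {Suc 0}) = gbasis {0, Suc 0}"
    "gmul (gbasis {0}) (gbasis {2}) = gbasis {0, 2}"
    "gmul (gbasis {Suc 0}) (gbasis {2}) = gbasis {Suc 0, 2}"
    "gmul (gbasis {0}) (gbasis {Suc 0, 2}) = gbasis {0, Suc 0, 2}"
    by (auto intro: gmul_gbasis_ordered)
  moreover have "gscalar 1 = gbasis {}" by (simp add: gscalar_def gbasis_def)
  ultimately show "(S, m) \<in> set monomials \<Longrightarrow> m p = gbasis S"
    by (auto simp: monomials_def smul_def stheta_apply sconst_apply)
qed

lemma monomial_Mcar: "(S, m) \<in> set monomials \<Longrightarrow> m \<in> Mcar"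
  by (auto simp: monomials_def intro!: smul_Mcar stheta_Mcar sconst_Mcar)

lemma monomial_hom: "(S, m) \<in> set monomials \<Longrightarrow> hom m"
  by (auto simp: monomials_def hom_def oddp_smul_odd_even evenp_smul_odd)

lemma monomial_index_set: "set (map fst monomials) = Pow {0,1,2}"
  by (auto simp: monomials_def Pow_insert)

lemma monomial_index_distinct: "distinct (map fst monomials)"
  by (simp add: monomials_def insert_eq_iff)

lemma Mcar_monomial_decomposition:
  assumes x: "x \<in> Mcar"
  shows "x = ssum (map (\<lambda>(S, m). smul m (sconst (\<lambda>p. x p S))) monomials)"
proof (intro ext)
  fix p U
  have "ssum (map (\<lambda>(S, m). smul m (sconst (\<lambda>p. x p S))) monomials) p U
      = (\<Sum>(S, m)\<leftarrow>monomials. gbasis S U * x p S)"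
    unfolding ssum_apply map_map
    by (intro arg_cong[where f = sum_list] map_cong)
      (auto simp: smul_sconst_right monomial_Mcar monomial_apply)
  also have "\<dots> = (\<Sum>S\<leftarrow>map fst monomials. gbasis S U * x p S)"
    by (simp add: case_prod_unfold comp_def)
  also have "\<dots> = (\<Sum>S\<in>Pow {0,1,2}. if U = S then x p U else 0)"
    unfolding sum_list_distinct_conv_sum_set[OF monomial_index_distinct] monomial_index_set
    by (intro sum.cong) (auto simp: gbasis_def)
  also have "\<dots> = x p U"
    using Mcar_coeff_outside[OF x, of U p] by auto
  finally show "x p U = ssum (map (\<lambda>(S, m). smul m (sconst (\<lambda>p. x p S))) monomials) p U" ..
qed

section \<open>Graded Poisson brackets\<close>

locale graded_poisson_bracket =
  fixes br :: "sl2 sfun \<Rightarrow> sl2 sfun \<Rightarrow> sl2 sfun"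
  assumes graded_poisson: "graded_poisson br"
begin

lemma br_Mcar: "x \<in> Mcar \<Longrightarrow> y \<in> Mcar \<Longrightarrow> br x y \<in> Mcar"
  using graded_poisson unfolding graded_poisson_def by (elim conjE) blast

lemma br_add_left: "x \<in> Mcar \<Longrightarrow> y \<in> Mcar \<Longrightarrow> z \<in> Mcar \<Longrightarrow> br (sadd x y) z = sadd (br x z) (br y z)"
  using graded_poisson unfolding graded_poisson_def by (elim conjE) blast

lemma br_scale_left: "x \<in> Mcar \<Longrightarrow> y \<in> Mcar \<Longrightarrow> br (sscale c x) y = sscale c (br x y)"
  using graded_poisson unfolding graded_poisson_def by (elim conjE) blast

lemma br_odd_even: "x \<in> Mcar \<Longrightarrow> y \<in> Mcar \<Longrightarrow> oddp x \<Longrightarrow> evenp y \<Longrightarrow> oddp (br x y)"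
  using graded_poisson unfolding graded_poisson_def by (elim conjE) blast

lemma br_antisym: "x \<in> Mcar \<Longrightarrow> y \<in> Mcar \<Longrightarrow> hom x \<Longrightarrow> hom y \<Longrightarrow>
      br x y = sscale ((-1) ^ (pdeg x * pdeg y + 1)) (br y x)"
  using graded_poisson unfolding graded_poisson_def by (elim conjE) blast

lemma br_leibniz: "x \<in> Mcar \<Longrightarrow> y \<in> Mcar \<Longrightarrow> z \<in> Mcar \<Longrightarrow> hom x \<Longrightarrow> hom y \<Longrightarrow> hom z \<Longrightarrow>
      br (smul x y) z = sadd (smul x (br y z)) (sscale ((-1) ^ (pdeg y * pdeg z)) (smul (br x z) y))"
  using graded_poisson unfolding graded_poisson_def by (elim conjE) blast

lemma br_jacobi: "x \<in> Mcar \<Longrightarrow> y \<in> Mcar \<Longrightarrow> z \<in> Mcar \<Longrightarrow> hom x \<Longrightarrow> hom y \<Longrightarrow> hom z \<Longrightarrow>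
      sadd (sscale ((-1) ^ (pdeg x * pdeg z)) (br (br x y) z))
        (sadd (sscale ((-1) ^ (pdeg y * pdeg z)) (br (br z x) y))
              (sscale ((-1) ^ (pdeg x * pdeg y)) (br (br y z) x))) = szero"
  using graded_poisson unfolding graded_poisson_def by (elim conjE) blast

lemma br_antisym_even: "x \<in> Mcar \<Longrightarrow> y \<in> Mcar \<Longrightarrow> evenp x \<Longrightarrow> hom y \<Longrightarrow> br x y = sscale (-1) (br y x)"
  using br_antisym[of x y] by (simp add: pdeg_def hom_def)

lemma br_sconst_antisym: "br (sconst f) (sconst g) = sscale (-1) (br (sconst g) (sconst f))"
  if "f \<in> Acar" "g \<in> Acar" for f g
  using that by (intro br_antisym_even) (simp_all add: sconst_Mcar)

lemma br_sconst_swap_vanishing: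
  assumes "f \<in> Acar" "g \<in> Acar" "br (sconst f) (sconst g) p = (\<lambda>_. 0)"
  shows "br (sconst g) (sconst f) p = (\<lambda>_. 0)"
  using assms br_sconst_antisym[of g f] by (simp add: sscale_def)

lemma br_self_even:
  assumes "x \<in> Mcar" "evenp x"
  shows "br x x = szero"
proof -
  have "br x x = sscale (-1) (br x x)"
    using assms by (intro br_antisym_even) (auto simp: hom_def)
  then have "br x x p S = - br x x p S" for p S
    by (metis sscale_def mult_minus1)
  then show ?thesis by (auto simp: szero_def fun_eq_iff)
qed

lemma br_szero_left:
  assumes "z \<in> Mcar"
  shows "br szero z = szero"
proof -
  have "szero = sscale 0 szero" by (simp add: sscale_def szero_def)
  then have "br szero z = sscale 0 (br szero z)"
    using br_scale_left[OF szero_Mcar assms, of 0] by metis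
  then show ?thesis by (simp add: sscale_def szero_def fun_eq_iff)
qed

lemma br_ssum_left:
  "(\<And>x. x \<in> set xs \<Longrightarrow> x \<in> Mcar) \<Longrightarrow> z \<in> Mcar \<Longrightarrow> br (ssum xs) z = ssum (map (\<lambda>x. br x z) xs)"
proof (induction xs)
  case Nil
  then show ?case by (simp add: ssum_def br_szero_left)
next
  case (Cons x xs)
  then have "br (ssum (x # xs)) z = sadd (br x z) (br (ssum xs) z)"
    by (simp add: ssum_def br_add_left ssum_Mcar[unfolded ssum_def])
  then show ?case using Cons by (simp add: ssum_def)
qed

lemma br_one:
  assumes "z \<in> Mcar" "hom z"
  shows "br one z = szero"
proof -
  have one: "one \<in> Mcar" by (simp add: sconst_Mcar)
  then have B: "br one z \<in> Mcar" using br_Mcar assms by blast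
  have "br one z = br (smul one one) z" by (simp add: smul_sconst_sconst)
  also have "\<dots> = sadd (br one z) (br one z)"
    using br_leibniz[OF one one assms(1)] assms B by (simp add: smul_sconst_left smul_sconst_right sscale_def)
  finally have "br one z p S = br one z p S + br one z p S" for p S
    by (metis sadd_def)
  then show ?thesis by (auto simp: szero_def fun_eq_iff)
qed

lemma br_const:
  assumes "z \<in> Mcar" "hom z"
  shows "br (sconst (\<lambda>_. c)) z = szero"
proof -
  have "sconst (\<lambda>_. c) = sscale c one" by (simp add: sscale_sconst)
  then show ?thesis
    using br_scale_left[of one z c] br_one[OF assms] assms by (simp add: sconst_Mcar sscale_def szero_def)
qed

lemma br_sconst_vanishing_from_generators:
  assumes z: "z \<in> Mcar" "hom z"
    and gens: "\<And>f. f \<in> {ca, cb, cc, cd} \<Longrightarrow> br (sconst f) z p = (\<lambda>_. 0)"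
    and F: "F \<in> Acar"
  shows "br (sconst F) z p = (\<lambda>_. 0)"
  using F unfolding Acar_def
proof (induction F rule: polyfun.induct)
  case (pf_const c)
  then show ?case using br_const[OF z] by (simp add: szero_def)
next
  case (pf_coord f)
  then show ?case using gens by simp
next
  case (pf_add f h)
  then have "br (sconst (\<lambda>x. f x + h x)) z = sadd (br (sconst f) z) (br (sconst h) z)"
    using br_add_left[OF sconst_Mcar sconst_Mcar z(1)] by (simp add: Acar_def sadd_sconst_sconst)
  then show ?case using pf_add by (simp add: sadd_def)
next
  case (pf_mult f h)
  then have "br (sconst (\<lambda>x. f x * h x)) z
      = sadd (smul (sconst f) (br (sconst h) z)) (sscale 1 (smul (br (sconst f) z) (sconst h)))"
    using br_leibniz[OF sconst_Mcar sconst_Mcar z(1)] z by (simp add: Acar_def smul_sconst_sconst)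
  then show ?case using pf_mult by (simp add: sadd_def sscale_def smul_def)
qed

lemma br_odd_apply_empty: "x \<in> Mcar \<Longrightarrow> z \<in> Mcar \<Longrightarrow> oddp x \<Longrightarrow> evenp z \<Longrightarrow> br x z p {} = 0"
  using br_odd_even by (simp add: oddp_def)

lemma br_theta_pair_low_degree:
  assumes z: "z \<in> Mcar" "evenp z" and kl: "k < 3" "l < 3" and U: "U = {} \<or> U = {j}"
  shows "br (smul (stheta k) (stheta l)) z p U = 0"
proof -
  have M: "stheta k \<in> Mcar" "stheta l \<in> Mcar" using kl by (simp_all add: stheta_Mcar)
  have "hom z" using z by (simp add: hom_def)
  then show ?thesis
    unfolding br_leibniz[OF M z(1) hom_stheta hom_stheta \<open>hom z\<close>]
    using U br_odd_apply_empty[OF M(1) z(1) _ z(2), of p] br_odd_apply_empty[OF M(2) z(1) _ z(2), of p]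
    by (auto simp: sadd_def sscale_def smul_def stheta_apply gmul_empty gmul_singleton gbasis_def)
qed

lemma br_theta_triple_low_degree:
  assumes z: "z \<in> Mcar" "evenp z"
  shows "br (smul (stheta 0) (smul (stheta 1) (stheta 2))) z p {j} = 0"
proof -
  have M: "stheta 0 \<in> Mcar" "smul (stheta 1) (stheta 2) \<in> Mcar"
    by (simp_all add: stheta_Mcar smul_Mcar)
  have hom: "hom z" "hom (smul (stheta 1) (stheta 2))"
    using z by (simp_all add: hom_def evenp_smul_odd)
  have "br (smul (stheta 1) (stheta 2)) z p {} = 0"
    using br_theta_pair_low_degree[OF z, of 1 2 "{}"] by simp
  then show ?thesis
    unfolding br_leibniz[OF M z(1) hom_stheta hom(2) hom(1)]
    using br_odd_apply_empty[OF M(1) z(1) _ z(2), of p]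
    by (auto simp: sadd_def sscale_def smul_def stheta_apply gmul_empty gmul_singleton gbasis_def)
qed

text \<open>Expand x in monomials: by the Leibniz rule, at p neither the constant term nor the
  monomials of degree at least two contribute in degree one.\<close>
lemma br_linear_part:
  assumes x: "x \<in> Mcar" and z: "z \<in> Mcar" "evenp z"
    and A: "\<And>F. F \<in> Acar \<Longrightarrow> br (sconst F) z p = (\<lambda>_. 0)"
  shows "br x z p {j} = (\<Sum>k<3. x p {k} * br (stheta k) z p {j})"
proof -
  have hz: "hom z" using z by (simp add: hom_def)
  have coeff: "(\<lambda>p. x p S) \<in> Acar" if "(S, m) \<in> set monomials" for S m
  proof -
    have "S \<in> set (map fst monomials)" using that by (metis fst_conv image_eqI set_map)
    then have "S \<subseteq> {0,1,2}" by (simp only: monomial_index_set Pow_iff)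
    then show ?thesis by (rule Mcar_coeff[OF x])
  qed
  have summand: "br (smul m (sconst (\<lambda>p. x p S))) z p {j} = br m z p {j} * x p S"
    if Sm: "(S, m) \<in> set monomials" for S m
  proof -
    have M: "m \<in> Mcar" "sconst (\<lambda>p. x p S) \<in> Mcar"
      using Sm coeff[OF Sm] by (simp_all add: monomial_Mcar sconst_Mcar)
    have "br (sconst (\<lambda>p. x p S)) z p = (\<lambda>_. 0)" using A coeff[OF Sm] .
    then show ?thesis
      unfolding br_leibniz[OF M z(1) monomial_hom[OF Sm] hom_sconst hz]
      using br_Mcar[OF M(1) z(1)]
      by (simp add: sadd_def sscale_def smul_def sconst_apply gmul_gscalar_right)
  qed
  define terms where "terms = map (\<lambda>(S, m). smul m (sconst (\<lambda>p. x p S))) monomials"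
  have "x = ssum terms"
    unfolding terms_def by (rule Mcar_monomial_decomposition[OF x])
  moreover have "y \<in> set terms \<Longrightarrow> y \<in> Mcar" for y
    using coeff monomial_Mcar by (auto simp: terms_def intro!: smul_Mcar sconst_Mcar)
  ultimately have "br x z = ssum (map (\<lambda>y. br y z) terms)"
    using br_ssum_left z by simp
  then have "br x z p {j} = (\<Sum>(S, m)\<leftarrow>monomials. br (smul m (sconst (\<lambda>p. x p S))) z p {j})"
    by (simp add: ssum_apply terms_def case_prod_unfold comp_def)
  also have "\<dots> = (\<Sum>(S, m)\<leftarrow>monomials. br m z p {j} * x p S)"
    using summand by (intro arg_cong[where f = sum_list] map_cong) auto
  also have "\<dots> = (\<Sum>k<3. x p {k} * br (stheta k) z p {j})"
    using br_theta_pair_low_degree[OF z, of _ _ "{j}" j] br_theta_triple_low_degree[OF z, of p j]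
      br_one[OF z(1) hz]
    by (simp add: monomials_def szero_def eval_nat_numeral lessThan_Suc)
  finally show ?thesis .
qed

end

section \<open>Coactions\<close>

lemma gshift_gscalar: "gshift (gscalar c) = gscalar c"
  by (auto simp: gshift_def gscalar_def fun_eq_iff)

lemma gshift_zero: "gshift (\<lambda>_. 0) = (\<lambda>_. 0)"
  by (simp add: gshift_def fun_eq_iff)

lemma gshift_gbasis_singleton: "gshift (gbasis {j}) = gbasis {j + 3}"
proof
  fix U :: "nat set"
  have "(\<forall>s\<in>U. 3 \<le> s) \<and> (\<lambda>s. s - 3) ` U = {j} \<longleftrightarrow> U = {j + 3}"
  proof
    assume U: "(\<forall>s\<in>U. 3 \<le> s) \<and> (\<lambda>s. s - 3) ` U = {j}"
    then have "s = j + 3" if "s \<in> U" for s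
      using that by (metis add.commute imageI le_add_diff_inverse singletonD)
    then show "U = {j + 3}" using U by auto
  qed auto
  then show "gshift (gbasis {j}) U = gbasis {j + 3} U"
    by (auto simp: gshift_def gbasis_def)
qed

lemma gshift_apply_singleton: "gshift v {m + 3} = v {m}"
  and gshift_apply_empty: "gshift v {} = v {}"
  by (simp_all add: gshift_def)

lemma tens_apply_shifted_singleton: "x \<in> Mcar \<Longrightarrow> tens x y (g, q) {m + 3} = x g {} * y q {m}"
  by (simp add: tens_def gmul_singleton gshift_apply_singleton gshift_apply_empty Mcar_coeff_outside)

lemma tens_sconst_right_apply: "finite U \<Longrightarrow> tens x (sconst f) (p, q) U = x p U * f q"
  by (simp add: tens_def sconst_apply gshift_gscalar gmul_gscalar_right)

lemma tens_szero_right: "tens x szero = (\<lambda>_ _. 0)"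
  by (simp add: tens_def szero_def gshift_zero fun_eq_iff)

lemma tens_sconst_sconst: "tens (sconst f) (sconst g) (p, q) = gscalar (f p * g q)"
  unfolding tens_def sconst_apply gshift_gscalar fst_conv snd_conv
  by (simp add: fun_eq_iff gmul_gscalar_left) (simp add: gscalar_def)

lemma gsubst_apply_singleton:
  assumes "\<And>k. \<sigma> k {} = 0"
  shows "gsubst \<sigma> v {n} = (\<Sum>k<3. v {k} * \<sigma> k {n})"
proof -
  have "gsubst \<sigma> v {n} = (\<Sum>S\<leftarrow>map fst monomials. v S * gprod (map \<sigma> (sorted_list_of_set S)) {n})"
    unfolding gsubst_def sum_list_distinct_conv_sum_set[OF monomial_index_distinct] monomial_index_set ..
  also have "\<dots> = (\<Sum>k<3. v {k} * \<sigma> k {n})"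
    by (simp add: monomials_def gprod_def gmul_singleton gmul_empty assms gone_def eval_nat_numeral
        lessThan_Suc)
  finally show ?thesis .
qed

lemma gsubst_gbasis_singleton:
  assumes "i \<in> {0,1,2}" "\<And>U. infinite U \<Longrightarrow> \<sigma> i U = 0"
  shows "gsubst \<sigma> (gbasis {i}) = \<sigma> i"
proof
  fix U
  have "gsubst \<sigma> (gbasis {i}) U = gprod (map \<sigma> (sorted_list_of_set {i})) U"
    unfolding gsubst_def using assms(1) by (subst sum_single_support[of _ "{i}"]) (auto simp: gbasis_def)
  also have "\<dots> = \<sigma> i U"
    using assms(2)[of U] gmul_gscalar_right[of "\<sigma> i" 1 U]
    by (cases "finite U") (auto simp: gprod_def gone_def gscalar_def)
  finally show "gsubst \<sigma> (gbasis {i}) U = \<sigma> i U" .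
qed

text \<open>Delta_L theta^i = sum over k of lcoef i k (x) theta^k.\<close>
definition lcoef :: "nat \<Rightarrow> nat \<Rightarrow> sl2 \<Rightarrow> complex" where
  "lcoef i k g = Lgen g i {k + 3}"

lemma lcoef_0:
  "lcoef 0 0 = (\<lambda>g. 1 + 2 * cb g * cc g)" "lcoef 0 1 = (\<lambda>g. - (ca g * cc g))" "lcoef 0 2 = (\<lambda>g. cb g * cd g)"
  by (simp_all add: lcoef_def Lgen_def fun_eq_iff)

lemma lcoef_0_Acar:
  assumes "k < 3"
  shows "lcoef 0 k \<in> Acar"
proof -
  have "(\<lambda>g. 1 + 2 * cb g * cc g) \<in> Acar"
    by (rule Acar_add[OF Acar_const Acar_mult[OF Acar_mult[OF Acar_const Acar_coords(2)] Acar_coords(3)]])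
  moreover have "(\<lambda>g. - (ca g * cc g)) \<in> Acar"
    using Acar_mult[OF Acar_const Acar_mult[OF Acar_coords(1,3)], of "-1"] by simp
  moreover have "(\<lambda>g. cb g * cd g) \<in> Acar"
    by (rule Acar_mult[OF Acar_coords(2,4)])
  moreover have "k = 0 \<or> k = 1 \<or> k = 2" using assms by auto
  ultimately show "lcoef 0 k \<in> Acar"
    by (elim disjE) (simp_all only: lcoef_0)
qed

lemma decomp_DeltaR_theta: "i < 3 \<Longrightarrow> decomp (DeltaR (stheta i)) [(stheta i, one)]"
  unfolding decomp_def
proof (intro conjI ext)
  fix pq :: "sl2 \<times> sl2" and U
  show "DeltaR (stheta i) pq U = ssum (map (\<lambda>(x, y). tens x y) [(stheta i, one)]) pq U"
    by (cases pq; cases "finite U")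
      (auto simp: DeltaR_def ssum_def sadd_def szero_def tens_def stheta_apply sconst_apply
        gshift_gscalar gmul_gscalar_right gbasis_def)
qed (auto simp: stheta_Mcar sconst_Mcar)

lemma decomp_DeltaR_a: "decomp (DeltaR sa) [(sa, sa), (sb, sc)]"
  unfolding decomp_def
proof (intro conjI ext)
  fix pq :: "sl2 \<times> sl2" and U
  show "DeltaR sa pq U = ssum (map (\<lambda>(x, y). tens x y) [(sa, sa), (sb, sc)]) pq U"
    by (cases pq)
      (simp add: DeltaR_def ssum_def sadd_def szero_def tens_sconst_sconst sconst_apply;
        simp add: gscalar_def sl2_mult_coords)
qed (auto simp: sconst_Mcar)

lemma decomp_DeltaL_theta0:
  "decomp (DeltaL (stheta 0)) [(sconst (lcoef 0 k), stheta k). k \<leftarrow> [0, 1, 2]]"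
  (is "decomp _ ?xs")
  unfolding decomp_def
proof (intro conjI ext)
  fix pq :: "sl2 \<times> sl2" and U
  obtain p q where pq: "pq = (p, q)" by (cases pq)
  have "gsubst (Lgen p) (gbasis {0}) = Lgen p 0"
    by (rule gsubst_gbasis_singleton) (auto simp: Lgen_def)
  then have "DeltaL (stheta 0) pq U = Lgen p 0 U"
    unfolding pq DeltaL_def by (simp add: stheta_apply)
  then show "DeltaL (stheta 0) pq U = ssum (map (\<lambda>(x, y). tens x y) ?xs) pq U"
    unfolding pq
    by (simp add: ssum_def sadd_def szero_def tens_def stheta_apply gshift_gbasis_singleton sconst_apply
        gmul_gscalar_left) (auto simp: Lgen_def lcoef_def gbasis_def)
qed (auto simp: sconst_Mcar lcoef_0_Acar stheta_Mcar)

context graded_poisson_bracket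
begin

lemma tbr_theta_one_apply:
  assumes "i < 3" "f \<in> Acar" "h \<in> Acar" "finite U"
  shows "tbr br (stheta i, one) (sconst f, sconst h) (p, q) U = br (stheta i) (sconst f) p U * h q"
proof -
  have "br one (sconst h) = szero" using br_one sconst_Mcar assms by simp
  moreover have "smul one (sconst h) = sconst h" by (simp add: smul_sconst_sconst)
  ultimately show ?thesis
    using assms by (simp add: tbr_def sscale_def sadd_def tens_szero_right tens_sconst_right_apply)
qed

lemma tbr_sconst_theta_apply:
  assumes "j < 3" "L \<in> Acar" "f \<in> Acar" "h \<in> Acar"
  shows "tbr br (sconst L, stheta j) (sconst f, sconst h) (g, q) {m + 3}
    = br (sconst L) (sconst f) g {} * gbasis {j} {m} * h q + L g * f g * br (stheta j) (sconst h) q {m}"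
proof -
  have M: "br (sconst L) (sconst f) \<in> Mcar" "smul (sconst L) (sconst f) \<in> Mcar" "stheta j \<in> Mcar"
    using assms br_Mcar sconst_Mcar smul_Mcar stheta_Mcar by auto
  have "smul (stheta j) (sconst h) q {m} = gbasis {j} {m} * h q"
    using smul_sconst_right[OF M(3)] by (simp add: stheta_apply)
  moreover have "smul (sconst L) (sconst f) g {} = L g * f g"
    by (simp add: smul_sconst_sconst)
  ultimately show ?thesis
    unfolding tbr_def prod.case pdeg_sconst mult_0_right power_0 sscale_def sadd_def
    using tens_apply_shifted_singleton[OF M(1)] tens_apply_shifted_singleton[OF M(2)] by simp
qed

end

section \<open>Prolongations of the Sklyanin bracket\<close>

locale sklyanin_prolongation = graded_poisson_bracket +
  assumes prolongs_sklyanin: "prolongs_sklyanin br"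
begin

lemma br_a_b: "br sa sb = sscale (-1) (smul sa sb)"
  and br_a_c: "br sa sc = sscale (-1) (smul sa sc)"
  and br_b_d: "br sb sd = sscale (-1) (smul sb sd)"
  and br_c_d: "br sc sd = sscale (-1) (smul sc sd)"
  and br_c_b: "br sc sb = szero"
  and br_a_d: "br sa sd = sscale (-2) (smul sb sc)"
  using prolongs_sklyanin by (simp_all add: prolongs_sklyanin_def)

lemma br_b_a: "br sb sa = smul sa sb"
  and br_c_a: "br sc sa = smul sa sc"
  and br_d_a: "br sd sa = sscale 2 (smul sb sc)"
  using br_sconst_antisym[of cb ca] br_sconst_antisym[of cc ca] br_sconst_antisym[of cd ca]
  by (simp_all add: br_a_b br_a_c br_a_d sscale_def)

lemma br_generators_at_one:
  assumes "f \<in> {ca, cb, cc, cd}" "g \<in> {ca, cb, cc, cd}"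
  shows "br (sconst f) (sconst g) sl2_one = (\<lambda>_. 0)"
proof -
  have given: "br sa sb sl2_one = (\<lambda>_. 0)" "br sa sc sl2_one = (\<lambda>_. 0)"
    "br sb sd sl2_one = (\<lambda>_. 0)" "br sc sd sl2_one = (\<lambda>_. 0)"
    "br sc sb sl2_one = (\<lambda>_. 0)" "br sa sd sl2_one = (\<lambda>_. 0)"
    unfolding br_a_b br_a_c br_b_d br_c_d br_c_b br_a_d smul_sconst_sconst sscale_sconst
    by (simp_all add: szero_def sconst_def fun_eq_iff)
  have diagonal: "br (sconst f) (sconst f) sl2_one = (\<lambda>_. 0)" if "f \<in> Acar" for f
    using br_self_even[of "sconst f"] that by (simp add: sconst_Mcar szero_def)
  show ?thesis
    using assms given br_sconst_swap_vanishing[OF _ _ given(1)] br_sconst_swap_vanishing[OF _ _ given(2)]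
      br_sconst_swap_vanishing[OF _ _ given(3)] br_sconst_swap_vanishing[OF _ _ given(4)]
      br_sconst_swap_vanishing[OF _ _ given(5)] br_sconst_swap_vanishing[OF _ _ given(6)]
      diagonal
    by (elim insertE emptyE) simp_all
qed

text \<open>Every bracket of two generators carries a factor b or c, so it vanishes at the identity;
  the Leibniz rule propagates this to all of A.\<close>
lemma sklyanin_vanishes_at_one:
  assumes "F \<in> Acar" "G \<in> Acar"
  shows "br (sconst F) (sconst G) sl2_one = (\<lambda>_. 0)"
proof -
  have right: "br (sconst F') (sconst g) sl2_one = (\<lambda>_. 0)"
    if g: "g \<in> {ca, cb, cc, cd}" and F': "F' \<in> Acar" for g F'
  proof (rule br_sconst_vanishing_from_generators[OF _ hom_sconst _ F'])
    show "sconst g \<in> Mcar" using g by (auto intro: sconst_Mcar)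
    show "br (sconst f) (sconst g) sl2_one = (\<lambda>_. 0)" if "f \<in> {ca, cb, cc, cd}" for f
      using that g by (rule br_generators_at_one)
  qed
  have left: "br (sconst g) (sconst G) sl2_one = (\<lambda>_. 0)" if g: "g \<in> {ca, cb, cc, cd}" for g
  proof (rule br_sconst_swap_vanishing[OF assms(2) _ right[OF g assms(2)]])
    show "g \<in> Acar" using g by auto
  qed
  show ?thesis
    by (rule br_sconst_vanishing_from_generators[OF sconst_Mcar[OF assms(2)] hom_sconst left assms(1)])
qed

abbreviation \<xi> :: "nat \<Rightarrow> sl2 sfun \<Rightarrow> nat \<Rightarrow> complex" where
  "\<xi> k z j \<equiv> br (stheta k) z sl2_one {j}"

lemma br_linear_part_at_one:
  assumes "x \<in> Mcar" "F \<in> Acar"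
  shows "br x (sconst F) sl2_one {j} = (\<Sum>k<3. x sl2_one {k} * \<xi> k (sconst F) j)"
  using assms sklyanin_vanishes_at_one by (intro br_linear_part) (auto simp: sconst_Mcar)

lemma jacobi_theta0_a_b:
  "(\<Sum>k<3. \<xi> 0 sa k * \<xi> k sb j) - (\<Sum>k<3. \<xi> 0 sb k * \<xi> k sa j) + \<xi> 0 sb j = 0"
proof -
  have t0: "stheta 0 \<in> Mcar" by (simp add: stheta_Mcar)
  note M = generators_Mcar
  have B: "br (stheta 0) sa \<in> Mcar" "br (stheta 0) sb \<in> Mcar" "br sa (stheta 0) \<in> Mcar"
    "br sb (stheta 0) \<in> Mcar"
    using br_Mcar t0 M by auto
  have b_theta0: "br sb (stheta 0) = sscale (-1) (br (stheta 0) sb)"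
    using br_antisym_even[OF M(2) t0] by simp
  have "br (br (stheta 0) sa) sb sl2_one {j} = (\<Sum>k<3. br (stheta 0) sa sl2_one {k} * \<xi> k sb j)"
    using br_linear_part_at_one[OF B(1)] by simp
  moreover have "br (br sb (stheta 0)) sa sl2_one {j} = - (\<Sum>k<3. \<xi> 0 sb k * \<xi> k sa j)"
    unfolding b_theta0 br_scale_left[OF B(2) M(1)] using br_linear_part_at_one[OF B(2)]
    by (simp add: sscale_def)
  moreover have "br (br sa sb) (stheta 0) sl2_one {j} = \<xi> 0 sb j"
    unfolding br_a_b br_scale_left[OF smul_Mcar[OF M(1,2)] t0]
      br_leibniz[OF M(1,2) t0 hom_sconst hom_sconst hom_stheta]
    by (simp add: smul_sconst_left[OF B(4)] smul_sconst_right[OF B(3)])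
      (simp add: sadd_def sscale_def b_theta0)
  moreover have "br (br (stheta 0) sa) sb sl2_one {j} + br (br sb (stheta 0)) sa sl2_one {j}
      + br (br sa sb) (stheta 0) sl2_one {j} = 0"
    using fun_cong[OF fun_cong[OF br_jacobi[OF t0 M(1,2) hom_stheta hom_sconst hom_sconst]]]
    by (simp add: sadd_def sscale_def szero_def add.assoc)
  ultimately show ?thesis by simp
qed

lemma br_lcoef_00_a: "br (sconst (lcoef 0 0)) sa g {} = 4 * ca g * cb g * cc g"
proof -
  have "sconst (lcoef 0 0) = sadd one (sscale 2 (smul sb sc))"
    by (simp only: smul_sconst_sconst sscale_sconst sadd_sconst_sconst) (simp add: lcoef_0 mult.assoc)
  moreover have "smul sb sc \<in> Mcar" using generators_Mcar smul_Mcar by auto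
  ultimately have "br (sconst (lcoef 0 0)) sa
      = sadd szero (sscale 2 (sadd (smul sb (br sc sa)) (sscale 1 (smul (br sb sa) sc))))"
    using br_add_left[OF sconst_Mcar sscale_Mcar generators_Mcar(1)] br_scale_left br_one
      br_leibniz[OF generators_Mcar(2,3,1)] generators_Mcar
    by simp
  then show ?thesis
    by (simp add: br_c_a br_b_a sadd_def sscale_def szero_def smul_apply_empty)
qed

lemma br_lcoef_01_a: "br (sconst (lcoef 0 1)) sa g {} = - (ca g * ca g * cc g)"
proof -
  have "sconst (lcoef 0 1) = sscale (-1) (smul sa sc)"
    unfolding lcoef_0 smul_sconst_sconst sscale_sconst by simp
  then have "br (sconst (lcoef 0 1)) sa = sscale (-1) (sadd (smul sa (br sc sa)) (sscale 1 (smul (br sa sa) sc)))"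
    using br_scale_left[OF smul_Mcar[OF generators_Mcar(1,3)] generators_Mcar(1)]
      br_leibniz[OF generators_Mcar(1,3,1)]
    by simp
  then show ?thesis
    using br_self_even[OF generators_Mcar(1)]
    by (simp add: br_c_a sadd_def sscale_def szero_def smul_apply_empty)
qed

lemma br_lcoef_02_a: "br (sconst (lcoef 0 2)) sa g {} = 2 * cb g * cb g * cc g + ca g * cb g * cd g"
proof -
  have "sconst (lcoef 0 2) = smul sb sd"
    unfolding lcoef_0 smul_sconst_sconst ..
  then have "br (sconst (lcoef 0 2)) sa = sadd (smul sb (br sd sa)) (sscale 1 (smul (br sb sa) sd))"
    using br_leibniz[OF generators_Mcar(2,4,1)] by simp
  then show ?thesis
    by (simp add: br_d_a br_b_a sadd_def sscale_def smul_apply_empty algebra_simps)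
qed

end

locale differential_sklyanin_prolongation = sklyanin_prolongation +
  fixes d :: "sl2 sfun \<Rightarrow> sl2 sfun"
  assumes ext_deriv: "is_ext_deriv d"
    and differential: "differential d br"
begin

lemma d_Mcar: "x \<in> Mcar \<Longrightarrow> d x \<in> Mcar"
  and d_scale: "x \<in> Mcar \<Longrightarrow> d (sscale c x) = sscale c (d x)"
  and d_leibniz: "x \<in> Mcar \<Longrightarrow> y \<in> Mcar \<Longrightarrow> hom x \<Longrightarrow>
      d (smul x y) = sadd (smul (d x) y) (sscale ((-1) ^ pdeg x) (smul x (d y)))"
  and d_a: "d sa = sadd (smul (stheta 0) sa) (smul (stheta 1) sc)"
  and d_b: "d sb = sadd (smul (stheta 0) sb) (smul (stheta 1) sd)"
  and d_c: "d sc = sadd (smul (stheta 2) sa) (sscale (-1) (smul (stheta 0) sc))"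
  using ext_deriv unfolding is_ext_deriv_def by (elim conjE; blast)+

lemma d_br: "f \<in> Mcar \<Longrightarrow> h \<in> Mcar \<Longrightarrow> hom f \<Longrightarrow> hom h \<Longrightarrow>
    d (br f h) = sadd (br (d f) h) (sscale ((-1) ^ pdeg f) (br f (d h)))"
  using differential unfolding differential_def by blast

lemma d_generators_at_one: "d sa sl2_one = gbasis {0}" "d sb sl2_one = gbasis {1}" "d sc sl2_one = gbasis {2}"
  by (simp_all add: d_a d_b d_c sadd_def sscale_def smul_sconst_right stheta_Mcar stheta_apply fun_eq_iff)

lemma oddp_d_b: "oddp (d sb)" and oddp_d_c: "oddp (d sc)"
  by (simp_all add: d_a d_b d_c oddp_sadd oddp_sscale oddp_smul_odd_even)

lemma differential_at_one:
  assumes F: "F \<in> Acar" and G: "G \<in> Acar" and dG: "oddp (d (sconst G))"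
  shows "d (br (sconst F) (sconst G)) sl2_one {m}
    = (\<Sum>k<3. d (sconst F) sl2_one {k} * \<xi> k (sconst G) m)
      - (\<Sum>k<3. d (sconst G) sl2_one {k} * \<xi> k (sconst F) m)"
proof -
  have M: "sconst F \<in> Mcar" "sconst G \<in> Mcar" "d (sconst F) \<in> Mcar" "d (sconst G) \<in> Mcar"
    using F G by (simp_all add: sconst_Mcar d_Mcar)
  have "br (sconst F) (d (sconst G)) = sscale (-1) (br (d (sconst G)) (sconst F))"
    using M dG by (intro br_antisym_even) (simp_all add: hom_def)
  then show ?thesis
    unfolding d_br[OF M(1,2) hom_sconst hom_sconst]
    using br_linear_part_at_one[OF M(3) G, of m] br_linear_part_at_one[OF M(4) F, of m]
    by (simp add: sadd_def sscale_def)
qed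

lemma d_sconst_mult_apply:
  assumes "f \<in> Acar" "g \<in> Acar"
  shows "d (smul (sconst f) (sconst g)) p U = d (sconst f) p U * g p + f p * d (sconst g) p U"
  unfolding d_leibniz[OF sconst_Mcar[OF assms(1)] sconst_Mcar[OF assms(2)] hom_sconst]
  using assms by (simp add: sconst_Mcar d_Mcar sadd_def sscale_def smul_sconst_left smul_sconst_right)

lemma differential_a_b: "\<xi> 0 sb m - \<xi> 1 sa m = - gbasis {1} {m}"
proof -
  have "d (br sa sb) sl2_one {m} = - gbasis {1} {m}"
    unfolding br_a_b d_scale[OF smul_Mcar[OF generators_Mcar(1,2)]]
    by (simp add: sscale_def d_sconst_mult_apply d_generators_at_one)
  with differential_at_one[of ca cb m] show ?thesis
    by (simp add: d_generators_at_one oddp_d_b eval_nat_numeral lessThan_Suc gbasis_def)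
qed

lemma differential_a_c: "\<xi> 0 sc m - \<xi> 2 sa m = - gbasis {2} {m}"
proof -
  have "d (br sa sc) sl2_one {m} = - gbasis {2} {m}"
    unfolding br_a_c d_scale[OF smul_Mcar[OF generators_Mcar(1,3)]]
    by (simp add: sscale_def d_sconst_mult_apply d_generators_at_one)
  with differential_at_one[of ca cc m] show ?thesis
    by (simp add: d_generators_at_one oddp_d_c eval_nat_numeral lessThan_Suc gbasis_def)
qed

end

locale poisson_lie_prolongation = sklyanin_prolongation +
  assumes poisson_lie: "poisson_lie br"
begin

lemma right_coaction_theta0_a:
  assumes "finite U"
  shows "br (stheta 0) sa g U = br (stheta 0) sa sl2_one U * ca g + br (stheta 0) sb sl2_one U * cc g"
proof -
  have "DeltaR (br (stheta 0) sa) = tbrsum br [(stheta 0, one)] [(sa, sa), (sb, sc)]"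
    using poisson_lie decomp_DeltaR_theta[of 0] decomp_DeltaR_a unfolding poisson_lie_def by auto
  from fun_cong[OF this, of "(sl2_one, g)"] show ?thesis
    using assms by (simp add: DeltaR_def tbrsum_def ssum_def sadd_def szero_def tbr_theta_one_apply)
qed

lemma left_coaction_theta0_a:
  assumes m: "m < 3"
  shows "(\<Sum>k<3. br (stheta 0) sa g {k} * lcoef k m g)
    = br (sconst (lcoef 0 m)) sa g {} + (\<Sum>k<3. lcoef 0 k g * (ca g * \<xi> k sa m + cb g * \<xi> k sc m))"
proof -
  have "DeltaL (br (stheta 0) sa) = tbrsum br [(sconst (lcoef 0 k), stheta k). k \<leftarrow> [0, 1, 2]] [(sa, sa), (sb, sc)]"
    using poisson_lie decomp_DeltaL_theta0 decomp_DeltaR_a unfolding poisson_lie_def by auto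
  from fun_cong[OF fun_cong[OF this, of "(g, sl2_one)"], of "{m + 3}"]
  have "gsubst (Lgen g) (br (stheta 0) sa g) {m + 3}
    = (\<Sum>k<3. br (sconst (lcoef 0 k)) sa g {} * gbasis {k} {m}
        + lcoef 0 k g * (ca g * \<xi> k sa m + cb g * \<xi> k sc m))"
    by (simp add: DeltaL_def tbrsum_def ssum_def sadd_def szero_def tbr_sconst_theta_apply lcoef_0_Acar
        sum_lessThan_3 algebra_simps)
  moreover have "gsubst (Lgen g) (br (stheta 0) sa g) {m + 3} = (\<Sum>k<3. br (stheta 0) sa g {k} * lcoef k m g)"
    by (simp add: gsubst_apply_singleton Lgen_def lcoef_def)
  moreover have "m = 0 \<or> m = 1 \<or> m = 2" using m by auto
  ultimately show ?thesis
    by (elim disjE) (simp_all add: gbasis_def sum_lessThan_3 add_ac)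
qed

lemma coaction_constraint:
  assumes "m < 3"
  shows "(\<Sum>k<3. (\<xi> 0 sa k * ca g + \<xi> 0 sb k * cc g) * lcoef k m g)
    = br (sconst (lcoef 0 m)) sa g {} + (\<Sum>k<3. lcoef 0 k g * (ca g * \<xi> k sa m + cb g * \<xi> k sc m))"
  using left_coaction_theta0_a[OF assms, of g] right_coaction_theta0_a[of "{_}" g] by simp

end

locale differential_poisson_lie_prolongation =
  poisson_lie_prolongation br + differential_sklyanin_prolongation br d
  for br d
begin

lemma linear_part_values:
  "\<xi> 0 sa 0 = 0" "\<xi> 0 sa 1 = 0" "\<xi> 0 sa 2 = 0" "\<xi> 1 sa 1 = 0"
  "\<xi> 0 sb 0 = 0" "\<xi> 0 sb 1 = -1" "\<xi> 0 sb 2 = 0"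
proof -
  note One_nat_def [simp del] \<comment> \<open>so that simplified facts keep the index 1 as in the claims\<close>
  txt \<open>At these four points the linear relations already determine the values above.\<close>
  define g1 where "g1 = Abs_sl2 (1, 1, 0, 1)"
  define g2 where "g2 = Abs_sl2 (1, 0, 1, 1)"
  define g3 where "g3 = Abs_sl2 (1, 1, 1, 2)"
  define g4 where "g4 = Abs_sl2 (3, 1, 2, 1)"
  have coords:
    "ca g1 = 1" "cb g1 = 1" "cc g1 = 0" "cd g1 = 1"
    "ca g2 = 1" "cb g2 = 0" "cc g2 = 1" "cd g2 = 1"
    "ca g3 = 1" "cb g3 = 1" "cc g3 = 1" "cd g3 = 2"
    "ca g4 = 3" "cb g4 = 1" "cc g4 = 2" "cd g4 = 1"
    unfolding g1_def g2_def g3_def g4_def by (simp_all add: Abs_sl2_coords)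
  have m: "(0::nat) < 3" "(1::nat) < 3" "(2::nat) < 3" by simp_all
  note C = coaction_constraint[OF m(1)] coaction_constraint[OF m(2)] coaction_constraint[OF m(3)]
  note C' = C[unfolded br_lcoef_00_a br_lcoef_01_a br_lcoef_02_a sum_lessThan_3]
  note E = C'[of g1] C'[of g2] C'[of g3] C'[of g4]
  note E' = E[unfolded lcoef_def Lgen_def coords, simplified]
  note D = differential_a_b[of 0] differential_a_b[of 1] differential_a_b[of 2]
    differential_a_c[of 0] differential_a_c[of 1] differential_a_c[of 2]
  note D' = D[unfolded gbasis_def, simplified]
  show "\<xi> 0 sa 0 = 0" "\<xi> 0 sa 1 = 0" "\<xi> 0 sa 2 = 0" "\<xi> 1 sa 1 = 0"
    "\<xi> 0 sb 0 = 0" "\<xi> 0 sb 1 = -1" "\<xi> 0 sb 2 = 0"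
    using E' D' by algebra+
qed

lemma contradiction: False
  using jacobi_theta0_a_b[of 1] linear_part_values by (simp add: sum_lessThan_3)

end

theorem theorem2:
  assumes "is_ext_deriv d"
  shows "\<not> (\<exists>br. graded_poisson br \<and> poisson_lie br \<and> prolongs_sklyanin br \<and> differential d br)"
proof
  assume "\<exists>br. graded_poisson br \<and> poisson_lie br \<and> prolongs_sklyanin br \<and> differential d br"
  then obtain br where "graded_poisson br" "poisson_lie br" "prolongs_sklyanin br" "differential d br"
    by blast
  then interpret differential_poisson_lie_prolongation br d
    using assms by unfold_locales
  show False
    by (rule contradiction)
qed

end
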